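(* Let $m\geq 2$, $1\leq j\leq m-1$, $N\geq 1$, $s\geq 0$ be integers, let $p$ be a prime, and let $a_0,\ldots,a_m\in\mathbb{Z}$ with $a_0a_{j-1}a_ja_m\neq 0$ and $p\nmid a_{j-1}a_j$. Let $$f=p^sa_{j-1}z^{j-1}+p^Na_jz^j+\sum_{\substack{0\leq i\leq m\\ i\neq j-1,\,j}}a_iz^i\in\mathbb{Z}[z]$$ be primitive, and suppose $$p^N|a_j|>|a_ma_{j-1}|p^{2s}+\sum_{i=2}^{j}|a_m^{i}a_{j-i}|p^{is}+\sum_{i=j+1}^{m}\frac{|a_i|}{|a_m|^{i-j}}.$$ Then $f$ is a product of at most $m-j$ irreducible polynomials in $\mathbb{Z}[z]$. In particular, if $j=m-1$, then $f$ is irreducible in $\mathbb{Z}[z]$.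
   Context: A polynomial in $\mathbb{Z}[z]$ is primitive if the greatest common divisor of its coefficients is $1$. "$f$ is a product of at most $r$ irreducible polynomials" means that in a factorization of $f$ into irreducible elements of $\mathbb{Z}[z]$, the number of factors (counted with multiplicity) is at most $r$. An empty sum is $0$. *)

theory Defs
  imports Complex_Main "HOL-Computational_Algebra.Computational_Algebra"
begin

definition product_of_at_most_irreducibles :: "nat \<Rightarrow> int poly \<Rightarrow> bool" where
  "product_of_at_most_irreducibles r f \<longleftrightarrow>
     (\<exists>fs :: int poly list. f = prod_list fs \<and> (\<forall>g\<in>set fs. irreducible g) \<and> length fs \<le> r)"

end

theory Submission
  imports Defs "HOL-Complex_Analysis.Residue_Theorem"
begin

text \<open>
  With \<open>r = 1 / (|a\<^sub>m| p\<^sup>s)\<close>, the hypothesis on \<open>p\<^sup>N |a\<^sub>j|\<close> says precisely that on the circle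
  \<open>|z| = r\<close> the term \<open>p\<^sup>N a\<^sub>j z\<^sup>j\<close> dominates all other terms of \<open>f\<close>, so by Rouche's theorem
  \<open>f\<close> has exactly \<open>j\<close> complex roots in the open disc of radius \<open>r\<close>. Conversely, an irreducible
  factor \<open>g\<close> of the primitive polynomial \<open>f\<close> has positive degree, \<open>|g(0)| \<ge> 1\<close> and
  \<open>|lc g| \<le> |a\<^sub>m|\<close>, so the product of its roots has modulus at least \<open>1 / |a\<^sub>m| \<ge> r\<close>: not all
  of them lie in the disc. Hence each factor owns one of the \<open>m - j\<close> roots outside the disc.
\<close>

hide_const (open) Henstock_Kurzweil_Integration.content

lemma irreducible_factorization_list_exists:
  fixes f :: "'a :: factorial_semiring"
  assumes "f \<noteq> 0" "\<not> is_unit f"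
  obtains fs where "f = prod_list fs" "\<forall>g\<in>set fs. irreducible g"
proof -
  obtain xs where xs: "mset xs = prime_factorization f" using ex_mset by blast
  have irr: "\<forall>g\<in>set xs. irreducible g"
    using xs by (metis in_prime_factors_imp_prime prime_elem_imp_irreducible prime_imp_prime_elem set_mset_mset)
  obtain u where u: "is_unit u" "f = u * prod_list xs"
    using prod_mset_prime_factorization_weak[OF assms(1)] xs
    by (metis associatedE2 prod_mset_prod_list)
  show ?thesis
  proof (cases xs)
    case Nil
    then show ?thesis using u assms(2) by simp
  next
    case (Cons x ys)
    show ?thesis
    proof
      show "f = prod_list ((u * x) # ys)" using u Cons by (simp add: mult_ac)
      show "\<forall>g\<in>set ((u * x) # ys). irreducible g"
        using irr Cons u by (simp add: irreducible_mult_unit_left)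
    qed
  qed
qed

lemma map_poly_of_int_mult:
  "map_poly (of_int :: int \<Rightarrow> 'a :: comm_ring_1) (p * q) = map_poly of_int p * map_poly of_int q"
  by (rule poly_eqI) (simp add: coeff_map_poly coeff_mult)

lemma map_poly_of_int_prod_list:
  "map_poly (of_int :: int \<Rightarrow> 'a :: comm_ring_1) (prod_list ps) = prod_list (map (map_poly of_int) ps)"
  by (induction ps) (simp_all add: map_poly_of_int_mult)

lemma abs_lead_coeff_le_of_dvd:
  fixes f g :: "int poly"
  assumes "g dvd f" "f \<noteq> 0"
  shows "\<bar>lead_coeff g\<bar> \<le> \<bar>lead_coeff f\<bar>"
proof -
  obtain h where h: "f = g * h" using assms(1) ..
  then have "lead_coeff h \<noteq> 0" using assms(2) by auto
  then have "\<bar>lead_coeff g\<bar> * 1 \<le> \<bar>lead_coeff g\<bar> * \<bar>lead_coeff h\<bar>"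
    by (intro mult_left_mono) linarith+
  then show ?thesis using h by (simp add: lead_coeff_mult abs_mult)
qed

lemma degree_pos_of_irreducible_dvd_primitive:
  fixes f g :: "int poly"
  assumes irr: "irreducible g" and dvd: "g dvd f" and prim: "content f = 1"
  shows "degree g > 0"
proof (rule ccontr)
  assume "\<not> degree g > 0"
  then have g: "g = [:coeff g 0:]" by (auto elim: degree_eq_zeroE)
  then have "coeff g 0 dvd content f" using dvd const_poly_dvd_iff_dvd_content by metis
  then have "is_unit g" using prim by (subst g) (simp add: is_unit_const_poly_iff)
  then show False using irr by (simp add: irreducible_def)
qed

lemma zorder_poly:
  fixes p :: "complex poly"
  assumes "p \<noteq> 0"
  shows "zorder (poly p) z = int (order z p)"
proof -
  obtain q where q: "p = [:- z, 1:] ^ order z p * q" and nd: "\<not> [:- z, 1:] dvd q"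
    using order_decomp[OF assms] by blast
  have "poly q z \<noteq> 0" using nd by (simp add: poly_eq_0_iff_dvd)
  show ?thesis
  proof (rule zorder_eqI[of UNIV z "poly q"])
    show "poly q holomorphic_on UNIV" by (auto intro!: holomorphic_intros)
    fix w show "poly p w = poly q w * (w - z) powi int (order z p)"
      by (subst q) (simp add: power_int_of_nat mult.commute)
  qed (use \<open>poly q z \<noteq> 0\<close> in auto)
qed

lemma size_filter_mset_eq_sum:
  "size (filter_mset P M) = (\<Sum>x\<in>set_mset M. if P x then count M x else 0)"
  by (simp add: size_multiset_overloaded_eq sum.If_cases Int_def conj_commute)

lemma size_proots_in_ball_Rouche:
  fixes F :: "complex poly" and c :: complex and r :: real
  assumes F: "F \<noteq> 0" and r: "r > 0" and c: "c \<noteq> 0"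
    and dominant: "\<And>z. norm z = r \<Longrightarrow> norm (poly F z - c * z ^ j) < norm (c * z ^ j)"
  shows "size {#z \<in># proots F. norm z < r#} = j"
proof -
  let ?\<gamma> = "circlepath 0 r"
  have "size {#z \<in># proots F. norm z < r#}
      = (\<Sum>z | poly F z = 0. if norm z < r then order z F else 0)"
    using F by (auto simp: size_filter_mset_eq_sum intro!: sum.cong)
  then have "of_nat (size {#z \<in># proots F. norm z < r#})
      = (\<Sum>z | poly F z = 0. winding_number ?\<gamma> z * of_int (zorder (poly F) z))"
  proof (simp add: of_nat_sum, intro sum.cong refl)
    fix z assume z: "z \<in> {z. poly F z = 0}"
    have "norm z \<noteq> r" using dominant z by fastforce
    moreover have "winding_number ?\<gamma> z = 0" if "norm z > r"
      by (rule winding_number_zero_outside[of _ "cball 0 r"])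
         (use that r in \<open>auto simp: path_image_circlepath_nonneg\<close>)
    ultimately show "of_nat (if norm z < r then order z F else 0)
        = winding_number ?\<gamma> z * of_int (zorder (poly F) z)"
      using winding_number_circlepath[of z 0 r] zorder_poly[OF F] by auto
  qed
  also have "\<dots> = (\<Sum>z | c * z ^ j = 0. winding_number ?\<gamma> z * of_int (zorder (\<lambda>z. c * z ^ j) z))"
  proof -
    have "(\<lambda>z. c * z ^ j) holomorphic_on UNIV" "(\<lambda>z. poly F z - c * z ^ j) holomorphic_on UNIV"
      by (auto intro!: holomorphic_intros)
    moreover have "finite {z. poly F z = 0}" using F by (rule poly_roots_finite)
    moreover have "finite {z. c * z ^ j = 0}" using c by (simp add: finite_subset[of _ "{0}"])
    ultimately show ?thesis
      using Rouche_theorem[of UNIV "\<lambda>z. c * z ^ j" "\<lambda>z. poly F z - c * z ^ j" ?\<gamma>]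
        r c dominant by (simp add: path_image_circlepath_nonneg connected_UNIV)
  qed
  also have "\<dots> = of_nat j"
  proof (cases "j = 0")
    case False
    then have "{z. c * z ^ j = 0} = {0}" using c by auto
    moreover have "zorder (\<lambda>z. c * z ^ j) 0 = int j"
      by (rule zorder_eqI[of UNIV 0 "\<lambda>_. c"]) (use c in \<open>auto simp: power_int_of_nat\<close>)
    ultimately show ?thesis using r by (simp add: winding_number_circlepath_centre)
  qed (use c in simp)
  finally show ?thesis by (simp only: of_nat_eq_iff)
qed

lemma size_proots_in_ball_dominant_coeff:
  fixes F :: "complex poly" and r :: real
  assumes r: "r > 0"
    and dominant: "(\<Sum>i\<in>{..degree F} - {j}. norm (coeff F i) * r ^ i) < norm (coeff F j) * r ^ j"
  shows "size {#z \<in># proots F. norm z < r#} = j"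
proof (rule size_proots_in_ball_Rouche)
  have "0 \<le> (\<Sum>i\<in>{..degree F} - {j}. norm (coeff F i) * r ^ i)"
    using r by (intro sum_nonneg) auto
  then show c: "coeff F j \<noteq> 0" using dominant by auto
  then show "F \<noteq> 0" by auto
  have j: "j \<le> degree F" using c by (rule le_degree)
  fix z :: complex assume z: "norm z = r"
  have "poly F z = coeff F j * z ^ j + (\<Sum>i\<in>{..degree F} - {j}. coeff F i * z ^ i)"
    using j by (simp add: poly_altdef sum.remove[of _ j])
  then have "norm (poly F z - coeff F j * z ^ j) = norm (\<Sum>i\<in>{..degree F} - {j}. coeff F i * z ^ i)"
    by simp
  also have "\<dots> \<le> (\<Sum>i\<in>{..degree F} - {j}. norm (coeff F i * z ^ i))"
    by (rule norm_sum)
  also have "\<dots> = (\<Sum>i\<in>{..degree F} - {j}. norm (coeff F i) * r ^ i)"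
    using z by (simp add: norm_mult norm_power)
  also have "\<dots> < norm (coeff F j * z ^ j)"
    using dominant z by (simp add: norm_mult norm_power)
  finally show "norm (poly F z - coeff F j * z ^ j) < norm (coeff F j * z ^ j)" .
qed (use r in simp)

lemma norm_poly_0_lt_of_roots_in_ball:
  fixes G :: "complex poly" and r :: real
  assumes deg: "degree G > 0" and roots: "\<And>z. poly G z = 0 \<Longrightarrow> norm z < r"
  shows "norm (poly G 0) < norm (lead_coeff G) * r ^ degree G"
proof -
  obtain root where G: "smult (lead_coeff G) (\<Prod>i<degree G. [:-root i, 1:]) = G"
    using complex_poly_decompose' by blast
  have root_in_ball: "norm (root i) < r" if "i < degree G" for i
  proof (rule roots)
    show "poly G (root i) = 0"
      using that by (subst G[symmetric]) (auto simp: poly_prod prod_zero_iff)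
  qed
  have "0 < r" using root_in_ball[OF deg] by (meson norm_ge_zero le_less_trans)
  have "(\<Prod>i<degree G. norm (root i)) < (\<Prod>i<degree G. r)"
    by (rule prod_mono_strict[of 0]) (use deg root_in_ball \<open>0 < r\<close> in \<open>auto simp: less_imp_le\<close>)
  moreover have "norm (poly G 0) = norm (lead_coeff G) * (\<Prod>i<degree G. norm (root i))"
    by (subst G[symmetric]) (simp add: poly_prod norm_mult prod_norm[symmetric])
  moreover have "lead_coeff G \<noteq> 0" using deg by auto
  ultimately show ?thesis by simp
qed

lemma int_poly_root_outside_ball:
  fixes g :: "int poly" and r :: real
  assumes deg: "degree g > 0" and g0: "coeff g 0 \<noteq> 0" and lc: "\<bar>lead_coeff g\<bar> * r \<le> 1"
  obtains z :: complex where "poly (map_poly of_int g) z = 0" "norm z \<ge> r"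
proof (rule ccontr)
  define G where "G = map_poly (of_int :: int \<Rightarrow> complex) g"
  assume no_root_outside: "\<not> thesis"
  note root_outside = that
  have roots: "norm z < r" if "poly G z = 0" for z
    using that no_root_outside root_outside[of z] unfolding G_def by force
  have degG: "degree G = degree g" and lcG: "lead_coeff G = of_int (lead_coeff g)"
    unfolding G_def by (simp_all add: degree_map_poly coeff_map_poly)
  obtain z where "poly G z = 0"
    using Fundamental_Theorem_Algebra.fundamental_theorem_of_algebra[of G] constant_degree[of G] deg degG by auto
  then have "0 < r" using roots[of z] norm_ge_zero[of z] by linarith
  have "lead_coeff g \<noteq> 0" using deg by auto
  then have "1 \<le> \<bar>real_of_int (lead_coeff g)\<bar>" by linarith
  then have "1 * r \<le> \<bar>real_of_int (lead_coeff g)\<bar> * r"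
    using \<open>0 < r\<close> by (intro mult_right_mono) auto
  with lc have "r \<le> 1" by simp
  then have "r ^ degree g \<le> r ^ 1"
    using deg \<open>0 < r\<close> by (intro power_decreasing) auto
  have "1 \<le> norm (poly G 0)"
    using g0 unfolding G_def by (simp add: poly_0_coeff_0 coeff_map_poly del: of_int_abs)
  also have "norm (poly G 0) < \<bar>lead_coeff g\<bar> * r ^ degree g"
    using norm_poly_0_lt_of_roots_in_ball[of G r] deg degG lcG roots by simp
  also have "\<dots> \<le> \<bar>lead_coeff g\<bar> * r"
    using \<open>r ^ degree g \<le> r ^ 1\<close> by (intro mult_left_mono) auto
  finally show False using lc by simp
qed

lemma length_le_size_proots_filter:
  fixes Gs :: "complex poly list"
  assumes "0 \<notin> set Gs" "\<forall>G\<in>set Gs. \<exists>z. poly G z = 0 \<and> P z"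
  shows "length Gs \<le> size {#z \<in># proots (prod_list Gs). P z#}"
  using assms
proof (induction Gs)
  case (Cons G Gs)
  then have "G \<noteq> 0" "prod_list Gs \<noteq> 0" by auto
  obtain z where z: "poly G z = 0" "P z" using Cons.prems by auto
  then have "z \<in># {#z \<in># proots G. P z#}" using \<open>G \<noteq> 0\<close> by simp
  then have "1 \<le> size {#z \<in># proots G. P z#}"
    by (metis Suc_le_eq gr0I size_eq_0_iff_empty empty_iff set_mset_empty One_nat_def)
  with Cons \<open>G \<noteq> 0\<close> \<open>prod_list Gs \<noteq> 0\<close> show ?case by (simp add: proots_mult)
qed simp

lemma irreducible_factor_root_outside_ball:
  fixes f g :: "int poly" and r :: real
  assumes prim: "content f = 1" and f0: "coeff f 0 \<noteq> 0" and lc: "\<bar>lead_coeff f\<bar> * r \<le> 1"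
    and irr: "irreducible g" and dvd: "g dvd f"
  obtains z :: complex where "poly (map_poly of_int g) z = 0" "norm z \<ge> r"
proof (rule int_poly_root_outside_ball)
  show "degree g > 0" using degree_pos_of_irreducible_dvd_primitive irr dvd prim .
  obtain h where h: "f = g * h" using dvd ..
  then show "coeff g 0 \<noteq> 0" using f0 by (simp add: coeff_mult_0)
  show "\<bar>lead_coeff g\<bar> * r \<le> 1"
  proof (cases "r \<ge> 0")
    case True
    have "f \<noteq> 0" using f0 by auto
    with True have "\<bar>real_of_int (lead_coeff g)\<bar> * r \<le> \<bar>real_of_int (lead_coeff f)\<bar> * r"
      using abs_lead_coeff_le_of_dvd[OF dvd] by (intro mult_right_mono) auto
    then show ?thesis using lc by linarith
  next
    case False
    then show ?thesis using mult_nonneg_nonpos[of "\<bar>real_of_int (lead_coeff g)\<bar>" r] by simp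
  qed
qed

lemma product_of_at_most_irreducibles_if_roots_in_ball:
  fixes f :: "int poly" and r :: real
  assumes prim: "content f = 1" and deg: "degree f > 0" and f0: "coeff f 0 \<noteq> 0"
    and lc: "\<bar>lead_coeff f\<bar> * r \<le> 1"
    and inside: "size {#z \<in># proots (map_poly (of_int :: int \<Rightarrow> complex) f). norm z < r#} = j"
  shows "product_of_at_most_irreducibles (degree f - j) f"
proof -
  have "f \<noteq> 0" using f0 by auto
  moreover have "\<not> is_unit f" using deg by (auto simp: is_unit_poly_iff)
  ultimately obtain fs where fs: "f = prod_list fs" "\<forall>g\<in>set fs. irreducible g"
    by (rule irreducible_factorization_list_exists)
  define F where "F = map_poly (of_int :: int \<Rightarrow> complex) f"
  define Gs where "Gs = map (map_poly (of_int :: int \<Rightarrow> complex)) fs"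
  have F_eq: "F = prod_list Gs"
    unfolding F_def Gs_def fs(1) by (rule map_poly_of_int_prod_list)
  have root_outside: "\<exists>z. poly G z = 0 \<and> \<not> norm z < r" if "G \<in> set Gs" for G
  proof -
    obtain g where g: "g \<in> set fs" "G = map_poly of_int g" using \<open>G \<in> set Gs\<close> Gs_def by auto
    have "g dvd f" using g(1) fs(1) by (simp add: prod_list_dvd)
    then obtain z :: complex where "poly (map_poly of_int g) z = 0" "norm z \<ge> r"
      using irreducible_factor_root_outside_ball prim f0 lc fs(2) g(1) by metis
    then show ?thesis using g(2) by auto
  qed
  have "F \<noteq> 0" unfolding F_def using \<open>f \<noteq> 0\<close> by (subst map_poly_eq_0_iff) auto
  then have "0 \<notin> set Gs" using F_eq by (simp add: prod_list_zero_iff)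
  then have "length fs \<le> size {#z \<in># proots F. \<not> norm z < r#}"
    using length_le_size_proots_filter[of Gs] root_outside F_eq by (simp add: Gs_def)
  moreover have "size (proots F) = size {#z \<in># proots F. norm z < r#} + size {#z \<in># proots F. \<not> norm z < r#}"
    by (metis multiset_partition size_union)
  moreover have "size (proots F) = degree f"
    unfolding F_def by (simp add: size_proots_complex degree_map_poly)
  ultimately have "length fs \<le> degree f - j"
    using inside unfolding F_def by linarith
  then show ?thesis
    using fs unfolding product_of_at_most_irreducibles_def by blast
qed

lemma irreducible_if_product_of_at_most_one_irreducible:
  assumes "product_of_at_most_irreducibles 1 f" "\<not> is_unit f"
  shows "irreducible f"
proof -
  obtain fs where fs: "f = prod_list fs" "\<forall>g\<in>set fs. irreducible g" "length fs \<le> 1"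
    using assms(1) unfolding product_of_at_most_irreducibles_def by blast
  then obtain g where "fs = [g]" using assms(2) by (cases fs) auto
  then show ?thesis using fs by simp
qed

lemma middle_coeff_dominates:
  fixes a b :: "nat \<Rightarrow> int" and p :: int and m j s :: nat
  defines "K \<equiv> real_of_int (\<bar>a m\<bar> * p ^ s)"
  assumes p: "p > 0" and am: "a m \<noteq> 0" and j: "1 \<le> j" "j < m"
    and b_pred: "b (j - 1) = p ^ s * a (j - 1)"
    and b_other: "\<And>i. i \<le> m \<Longrightarrow> i \<noteq> j - 1 \<Longrightarrow> i \<noteq> j \<Longrightarrow> b i = a i"
    and ineq: "\<bar>real_of_int (b j)\<bar> >
                 real_of_int (\<bar>a m * a (j - 1)\<bar> * p ^ (2 * s))
               + (\<Sum>i=2..j. real_of_int (\<bar>a m ^ i * a (j - i)\<bar> * p ^ (i * s)))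
               + (\<Sum>i=j+1..m. real_of_int \<bar>a i\<bar> / real_of_int \<bar>a m\<bar> ^ (i - j))"
  shows "(\<Sum>i\<in>{..m} - {j}. \<bar>real_of_int (b i)\<bar> * (1 / K) ^ i) < \<bar>real_of_int (b j)\<bar> * (1 / K) ^ j"
proof -
  \<comment> \<open>After multiplication by \<open>K\<^sup>j\<close> the terms below \<open>j\<close> give exactly the first two sums of
    the hypothesis, and the terms above \<open>j\<close> are bounded by the third one.\<close>
  define B where "B i = \<bar>real_of_int (b i)\<bar>" for i
  have am_ge_1: "1 \<le> \<bar>real_of_int (a m)\<bar>" using am by linarith
  have "1 \<le> real_of_int p ^ s" using p by simp
  then have am_le_K: "\<bar>real_of_int (a m)\<bar> \<le> K"
    unfolding K_def using mult_left_mono[of 1 "real_of_int p ^ s" "\<bar>real_of_int (a m)\<bar>"] by simp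
  then have "K > 0" using am_ge_1 by linarith
  have lower: "(\<Sum>i<j. B i * K ^ (j - i))
      = real_of_int (\<bar>a m * a (j - 1)\<bar> * p ^ (2 * s))
      + (\<Sum>i=2..j. real_of_int (\<bar>a m ^ i * a (j - i)\<bar> * p ^ (i * s)))"
  proof -
    have "(\<Sum>i<j. B i * K ^ (j - i)) = (\<Sum>k=1..j. B (j - k) * K ^ k)"
      by (rule sum.reindex_bij_witness[of _ "\<lambda>k. j - k" "\<lambda>i. j - i"]) auto
    also have "\<dots> = B (j - 1) * K + (\<Sum>k=2..j. B (j - k) * K ^ k)"
      using j by (simp add: sum.atLeast_Suc_atMost numeral_2_eq_2)
    also have "B (j - 1) * K = real_of_int (\<bar>a m * a (j - 1)\<bar> * p ^ (2 * s))"
      unfolding B_def K_def b_pred using p by (simp add: abs_mult power_mult_distrib power2_eq_square power_mult mult_ac)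
    also have "(\<Sum>k=2..j. B (j - k) * K ^ k) = (\<Sum>k=2..j. real_of_int (\<bar>a m ^ k * a (j - k)\<bar> * p ^ (k * s)))"
    proof (rule sum.cong[OF refl])
      fix k assume "k \<in> {2..j}"
      then have "b (j - k) = a (j - k)" using j by (intro b_other) auto
      then show "B (j - k) * K ^ k = real_of_int (\<bar>a m ^ k * a (j - k)\<bar> * p ^ (k * s))"
        unfolding B_def K_def using p
        by (simp add: abs_mult power_abs power_mult_distrib mult_ac flip: power_mult)
    qed
    finally show ?thesis .
  qed
  have upper: "(\<Sum>i=j + 1..m. B i / K ^ (i - j)) \<le> (\<Sum>i=j+1..m. real_of_int \<bar>a i\<bar> / real_of_int \<bar>a m\<bar> ^ (i - j))"
  proof (rule sum_mono)
    fix i assume "i \<in> {j+1..m}"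
    then have "b i = a i" using j by (intro b_other) auto
    then have "B i = \<bar>real_of_int (a i)\<bar>" unfolding B_def by simp
    moreover have "\<bar>real_of_int (a m)\<bar> ^ (i - j) \<le> K ^ (i - j)"
      using am_le_K by (intro power_mono) auto
    moreover have "0 < \<bar>real_of_int (a m)\<bar> ^ (i - j)" using am by simp
    ultimately show "B i / K ^ (i - j) \<le> real_of_int \<bar>a i\<bar> / real_of_int \<bar>a m\<bar> ^ (i - j)"
      by (metis divide_left_mono abs_ge_zero of_int_abs order.strict_trans2 mult_pos_pos)
  qed
  have split: "{..m} - {j} = {..<j} \<union> {j + 1..m}" using j by auto
  have "(\<Sum>i\<in>{..m} - {j}. B i * (1 / K) ^ i) * K ^ j = (\<Sum>i\<in>{..m} - {j}. B i * (1 / K) ^ i * K ^ j)"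
    by (rule sum_distrib_right)
  also have "\<dots> = (\<Sum>i<j. B i * (1 / K) ^ i * K ^ j) + (\<Sum>i=j + 1..m. B i * (1 / K) ^ i * K ^ j)"
    unfolding split by (rule sum.union_disjoint) auto
  also have "\<dots> = (\<Sum>i<j. B i * K ^ (j - i)) + (\<Sum>i=j + 1..m. B i / K ^ (i - j))"
  proof -
    have "B i * (1 / K) ^ i * K ^ j = B i * K ^ (j - i)" if "i < j" for i
      using \<open>K > 0\<close> that by (simp add: power_one_over power_diff)
    moreover have "B i * (1 / K) ^ i * K ^ j = B i / K ^ (i - j)" if "j < i" for i
      using \<open>K > 0\<close> that by (simp add: power_one_over power_diff)
    ultimately show ?thesis by (intro arg_cong2[where f = "(+)"] sum.cong) auto
  qed
  also have "\<dots> < B j"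
    using lower upper ineq unfolding B_def by linarith
  finally have "(\<Sum>i\<in>{..m} - {j}. B i * (1 / K) ^ i) < B j / K ^ j"
    using \<open>K > 0\<close> by (simp add: pos_less_divide_eq)
  then show ?thesis unfolding B_def by (simp add: power_one_over)
qed

theorem corollary7:
  fixes m j N s :: nat and p :: int and a :: "nat \<Rightarrow> int" and f :: "int poly"
  assumes m: "m \<ge> 2"
    and j: "1 \<le> j" "j \<le> m - 1"
    and N: "N \<ge> 1"
    and p: "prime p"
    and nz: "a 0 * a (j - 1) * a j * a m \<noteq> 0"
    and ndvd: "\<not> p dvd a (j - 1) * a j"
    and f_def: "f = monom (p ^ s * a (j - 1)) (j - 1) + monom (p ^ N * a j) j
                   + (\<Sum>i\<in>{0..m} - {j - 1, j}. monom (a i) i)"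
    and prim: "content f = 1"
    and ineq: "real_of_int (p ^ N * \<bar>a j\<bar>) >
                 real_of_int (\<bar>a m * a (j - 1)\<bar> * p ^ (2 * s))
               + (\<Sum>i=2..j. real_of_int (\<bar>a m ^ i * a (j - i)\<bar> * p ^ (i * s)))
               + (\<Sum>i=j+1..m. real_of_int \<bar>a i\<bar> / real_of_int \<bar>a m\<bar> ^ (i - j))"
  shows "product_of_at_most_irreducibles (m - j) f \<and> (j = m - 1 \<longrightarrow> irreducible f)"
proof -
  have "p > 0" using p by (simp add: prime_gt_0_int)
  have "j < m" "j - 1 \<noteq> j" using j m by auto
  have coeff_f: "coeff f i = (if i = j - 1 then p ^ s * a (j - 1) else if i = j then p ^ N * a j
                             else if i \<le> m then a i else 0)" for i
    using j unfolding f_def by (auto simp: coeff_sum coeff_monom)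
  have deg: "degree f = m"
    using coeff_f \<open>j < m\<close> nz by (intro antisym degree_le le_degree) auto
  have lc: "lead_coeff f = a m" and "coeff f 0 \<noteq> 0"
    using coeff_f deg \<open>j < m\<close> nz \<open>p > 0\<close> by auto
  define K where "K = real_of_int (\<bar>a m\<bar> * p ^ s)"
  have "K \<ge> \<bar>real_of_int (a m)\<bar>" "\<bar>real_of_int (a m)\<bar> \<ge> 1"
    using \<open>p > 0\<close> nz unfolding K_def by (auto simp: mult_le_cancel_left1)
  have "\<bar>real_of_int (coeff f j)\<bar> = real_of_int (p ^ N * \<bar>a j\<bar>)"
    using coeff_f[of j] \<open>j - 1 \<noteq> j\<close> \<open>p > 0\<close> by (simp add: abs_mult)
  then have "(\<Sum>i\<in>{..m} - {j}. \<bar>real_of_int (coeff f i)\<bar> * (1 / K) ^ i)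
      < \<bar>real_of_int (coeff f j)\<bar> * (1 / K) ^ j"
    unfolding K_def using ineq nz \<open>p > 0\<close> j \<open>j < m\<close> coeff_f
    by (intro middle_coeff_dominates) auto
  then have inside: "size {#z \<in># proots (map_poly (of_int :: int \<Rightarrow> complex) f). norm z < 1 / K#} = j"
    using \<open>K \<ge> \<bar>real_of_int (a m)\<bar>\<close> \<open>\<bar>real_of_int (a m)\<bar> \<ge> 1\<close>
    by (intro size_proots_in_ball_dominant_coeff) (auto simp: coeff_map_poly degree_map_poly deg)
  have lc_bound: "\<bar>lead_coeff f\<bar> * (1 / K) \<le> 1"
    using lc \<open>K \<ge> \<bar>real_of_int (a m)\<bar>\<close> \<open>\<bar>real_of_int (a m)\<bar> \<ge> 1\<close> by (simp add: field_simps)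
  have "product_of_at_most_irreducibles (m - j) f"
    using product_of_at_most_irreducibles_if_roots_in_ball[OF prim _ \<open>coeff f 0 \<noteq> 0\<close> lc_bound inside]
      deg m by simp
  moreover have "\<not> is_unit f" using deg m by (auto simp: is_unit_poly_iff)
  ultimately show ?thesis
    using irreducible_if_product_of_at_most_one_irreducible m by auto
qed

end
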